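(* Let $Q_0$ be a probability measure on $\mathbb{R}^n$ supported on a bounded set, $\sigma>0$, $R>0$, $\epsilon\in(0,1)$, and let $\mathcal C=\{\hat\mu_1,\dots,\hat\mu_{k'}\}$ be a complete set of $R$-warm starts for $Q_0$ with Voronoi partition $V_1,\dots,V_{k'}$. Let $R'=3R+2\sqrt2\,\sigma\sqrt{\ln(k'/\epsilon)}$, $S_i=B_{R'}(\hat\mu_i)$, and assume $Q_0(S_i)>0$ for each $i$. Define $f_{\mathrm{loc},\sigma^2}(y)=f_{S_i,\sigma^2}(y)$ for $y\in V_i$. Then, with $P=Q_0*\mathcal N(0,\sigma^2I_n)$, $$\|f_{\sigma^2}-f_{\mathrm{loc},\sigma^2}\|_{L^2(P)}^2\le(32\sigma^2+6R'^2)\,\epsilon.$$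
   Context: $B_R(x_0)$ is the closed Euclidean ball. A finite set $\mathcal C\subset\mathbb{R}^n$ is a complete set of $R$-warm starts for $Q_0$ if $Q_0\big(\bigcup_{\hat\mu\in\mathcal C}B_R(\hat\mu)\big)=1$. The Voronoi partition of $\{\hat\mu_1,\dots,\hat\mu_{k'}\}$ is $V_j=\{x:\|x-\hat\mu_j\|=\min_{j'}\|x-\hat\mu_{j'}\|\}$ (ties, a null set, broken arbitrarily so that the $V_j$ partition $\mathbb{R}^n$). For a set $S$ with $Q_0(S)>0$, $Q_0|_S(A)=Q_0(A\cap S)/Q_0(S)$, and $f_{S,\sigma^2}(y)=\mathbb E[\mu\mid Y=y]$ where $\mu\sim Q_0|_S$, $Y=\mu+\sigma\xi$, $\xi\sim\mathcal N(0,I_n)$ independent; $f_{\sigma^2}=f_{\mathbb{R}^n,\sigma^2}$ is the same with $\mu\sim Q_0$. *)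

theory Defs
  imports "HOL-Probability.Probability"
begin

definition gauss_pdf :: "real \<Rightarrow> 'a::euclidean_space \<Rightarrow> real" where
  "gauss_pdf \<sigma> z = (2 * pi * \<sigma>\<^sup>2) powr (- real DIM('a) / 2) * exp (- (norm z)\<^sup>2 / (2 * \<sigma>\<^sup>2))"

definition gauss_measure :: "real \<Rightarrow> 'a::euclidean_space measure" where
  "gauss_measure \<sigma> = density lborel (\<lambda>z. ennreal (gauss_pdf \<sigma> z))"

definition cond_measure :: "'a measure \<Rightarrow> 'a set \<Rightarrow> 'a measure" where
  "cond_measure Q S = density Q (\<lambda>x. ennreal (indicator S x / measure Q S))"

text \<open>Posterior mean E[mu | Y = y] for mu ~ M, Y = mu + sigma xi (Bayes formula).\<close>
definition post_mean :: "'a::euclidean_space measure \<Rightarrow> real \<Rightarrow> 'a \<Rightarrow> 'a" where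
  "post_mean M \<sigma> y =
     (\<integral>\<mu>. gauss_pdf \<sigma> (y - \<mu>) *\<^sub>R \<mu> \<partial>M) /\<^sub>R (\<integral>\<mu>. gauss_pdf \<sigma> (y - \<mu>) \<partial>M)"

definition gauss_conv :: "'a::euclidean_space measure \<Rightarrow> real \<Rightarrow> 'a measure" where
  "gauss_conv Q \<sigma> = distr (Q \<Otimes>\<^sub>M gauss_measure \<sigma>) borel (\<lambda>(m, z). m + z)"

definition warm_starts :: "'a::euclidean_space measure \<Rightarrow> real \<Rightarrow> 'a set \<Rightarrow> bool" where
  "warm_starts Q R C \<longleftrightarrow> finite C \<and> emeasure Q (\<Union>c\<in>C. cball c R) = 1"

definition voronoi_partition :: "'a::euclidean_space set \<Rightarrow> ('a \<Rightarrow> 'a set) \<Rightarrow> bool" where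
  "voronoi_partition C V \<longleftrightarrow>
     (\<forall>c\<in>C. V c \<in> sets borel) \<and>
     (\<forall>c\<in>C. \<forall>x\<in>V c. \<forall>c'\<in>C. dist x c \<le> dist x c') \<and>
     (\<Union>c\<in>C. V c) = UNIV \<and>
     (\<forall>c\<in>C. \<forall>c'\<in>C. c \<noteq> c' \<longrightarrow> V c \<inter> V c' = {})"

end

(*
  Write w(mu) = phi(y - mu) for the Gaussian weight, Z(y) = int w dQ0 for the density of P,
  and let c be the centre of the Voronoi cell of y, S = B_R'(c).  The localized posterior mean
  m = f_S(y) is a w-weighted average over S, so m lies in S and the weighted deviations mu - m
  cancel on S.  Hence Z (f(y) - m) = int_{S^c} w (mu - m) dQ0, and by Cauchy-Schwarz
  Z |f(y) - m|^2 <= int_{S^c} w |mu - m|^2 dQ0 <= int_{S^c} w (2|mu - c|^2 + 2R'^2) dQ0.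
  Integrating against dP = Z dy cancels Z, and Tonelli leaves, for each centre c, the prior mass
  outside S weighted by 2|mu - c|^2 + 2R'^2 times the Gaussian mass of the cell V_c around mu.
  As mu is within R of another centre c', the cell lies in a half-space at distance about
  |mu - c| - R from mu, and a Chernoff bound gives exp(-(|mu - c| - R)^2 / (8 sigma^2)); the
  choice of R' makes each of the k' terms at most (32 sigma^2 + 6 R'^2) eps / k'.
*)

theory Submission
  imports Defs
begin

lemma gauss_pdf_pos: "\<sigma> > 0 \<Longrightarrow> gauss_pdf \<sigma> z > 0"
  by (simp add: gauss_pdf_def)

lemma gauss_pdf_nonneg: "\<sigma> > 0 \<Longrightarrow> gauss_pdf \<sigma> z \<ge> 0"
  by (simp add: gauss_pdf_def)

lemma gauss_pdf_le_gauss_pdf_0: "gauss_pdf \<sigma> (z::'a::euclidean_space) \<le> gauss_pdf \<sigma> (0::'a)"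
  unfolding gauss_pdf_def by (simp add: mult_left_le)

lemma borel_measurable_gauss_pdf[measurable]: "gauss_pdf \<sigma> \<in> borel_measurable borel"
  unfolding gauss_pdf_def[abs_def] by measurable

lemma continuous_on_gauss_pdf[continuous_intros]:
  assumes "\<sigma> > 0" and "continuous_on S f"
  shows "continuous_on S (\<lambda>x. gauss_pdf \<sigma> (f x))"
proof -
  have "continuous_on UNIV (gauss_pdf \<sigma>)"
    unfolding gauss_pdf_def[abs_def] using assms(1) by (intro continuous_intros) auto
  from continuous_on_compose2[OF this assms(2)] show ?thesis
    by simp
qed

lemma powr_minus_half_real:
  assumes "x > 0"
  shows "x powr (- real n / 2) = (1 / sqrt x) ^ n"
proof -
  have "1 / sqrt x = x powr (-1/2)"
    using assms by (simp add: powr_minus_divide powr_half_sqrt[symmetric])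
  then have "(1 / sqrt x) ^ n = (x powr (-1/2)) powr real n"
    using assms by (simp add: powr_realpow)
  then show ?thesis
    by (simp add: powr_powr)
qed

lemma gauss_pdf_eq_prod_normal_density:
  assumes "\<sigma> > 0"
  shows "gauss_pdf \<sigma> z = (\<Prod>b\<in>Basis. normal_density 0 \<sigma> (z \<bullet> b))"
proof -
  have "(2 * pi * \<sigma>\<^sup>2) powr (- real DIM('a) / 2) = (1 / sqrt (2 * pi * \<sigma>\<^sup>2)) ^ DIM('a)"
    using assms by (intro powr_minus_half_real) simp
  moreover have "(norm z)\<^sup>2 = (\<Sum>b\<in>Basis. (z \<bullet> b)\<^sup>2)"
    by (subst power2_norm_eq_inner, subst euclidean_inner) (simp add: power2_eq_square)
  then have "exp (- (norm z)\<^sup>2 / (2 * \<sigma>\<^sup>2)) = (\<Prod>b\<in>Basis. exp (- (z \<bullet> b)\<^sup>2 / (2 * \<sigma>\<^sup>2)))"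
    by (simp add: exp_sum[symmetric] sum_divide_distrib[symmetric] sum_negf)
  moreover have "(\<Prod>b\<in>Basis. normal_density 0 \<sigma> (z \<bullet> b))
      = (1 / sqrt (2 * pi * \<sigma>\<^sup>2)) ^ DIM('a) * (\<Prod>b\<in>Basis. exp (- (z \<bullet> b)\<^sup>2 / (2 * \<sigma>\<^sup>2)))"
    unfolding normal_density_def diff_zero prod.distrib prod_constant ..
  ultimately show ?thesis
    unfolding gauss_pdf_def by simp
qed

lemma nn_integral_gauss_pdf:
  assumes "\<sigma> > 0"
  shows "(\<integral>\<^sup>+z. gauss_pdf \<sigma> (z::'a::euclidean_space) \<partial>lborel) = 1"
proof -
  have "(\<integral>\<^sup>+x. normal_density 0 \<sigma> x \<partial>lborel) = 1"
    using integrable_normal_density[OF assms] integral_normal_density[OF assms]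
    by (subst nn_integral_eq_integral) auto
  then have "(\<integral>\<^sup>+z. (\<Prod>b\<in>Basis. ennreal (normal_density 0 \<sigma> ((z::'a) \<bullet> b))) \<partial>lborel) = 1"
    by (subst nn_integral_lborel_prod) auto
  then show ?thesis
    by (simp add: gauss_pdf_eq_prod_normal_density[OF assms] prod_ennreal)
qed

lemma prob_space_gauss_measure: "\<sigma> > 0 \<Longrightarrow> prob_space (gauss_measure \<sigma>)"
  unfolding gauss_measure_def
  by (rule prob_spaceI) (simp add: emeasure_density nn_integral_gauss_pdf)

lemma nn_integral_lborel_translate:
  fixes f :: "'a::euclidean_space \<Rightarrow> ennreal"
  assumes [measurable]: "f \<in> borel_measurable borel"
  shows "(\<integral>\<^sup>+y. f (y - b) \<partial>lborel) = (\<integral>\<^sup>+z. f z \<partial>lborel)"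
proof -
  have "(\<integral>\<^sup>+z. f z \<partial>lborel) = (\<integral>\<^sup>+z. f z \<partial>distr lborel borel ((+) (-b)))"
    by (simp add: lborel_distr_plus)
  also have "\<dots> = (\<integral>\<^sup>+y. f (y - b) \<partial>lborel)"
    by (subst nn_integral_distr) auto
  finally show ?thesis ..
qed

lemma norm_diff_power2: "(norm (x - y))\<^sup>2 = (norm x)\<^sup>2 - 2 * (x \<bullet> y) + (norm y)\<^sup>2"
  by (simp add: power2_norm_eq_inner inner_diff_left inner_diff_right inner_commute)

lemma gauss_pdf_mult_exp_inner:
  assumes "\<sigma> > 0"
  shows "gauss_pdf \<sigma> z * exp (l * (z \<bullet> u))
    = exp (l\<^sup>2 * \<sigma>\<^sup>2 * (norm u)\<^sup>2 / 2) * gauss_pdf \<sigma> (z - (l * \<sigma>\<^sup>2) *\<^sub>R u)"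
proof -
  have "- (norm z)\<^sup>2 / (2 * \<sigma>\<^sup>2) + l * (z \<bullet> u)
      = - (norm (z - (l * \<sigma>\<^sup>2) *\<^sub>R u))\<^sup>2 / (2 * \<sigma>\<^sup>2) + l\<^sup>2 * \<sigma>\<^sup>2 * (norm u)\<^sup>2 / 2"
    using assms unfolding norm_diff_power2[of z] by (simp add: field_simps power2_eq_square)
  then show ?thesis
    unfolding gauss_pdf_def by (simp add: exp_add[symmetric] algebra_simps)
qed

lemma nn_integral_gauss_pdf_exp_inner:
  assumes "\<sigma> > 0"
  shows "(\<integral>\<^sup>+z. ennreal (gauss_pdf \<sigma> z * exp (l * (z \<bullet> u))) \<partial>lborel)
       = ennreal (exp (l\<^sup>2 * \<sigma>\<^sup>2 * (norm (u::'a::euclidean_space))\<^sup>2 / 2))"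
proof -
  define a where "a = (l * \<sigma>\<^sup>2) *\<^sub>R u"
  define K where "K = exp (l\<^sup>2 * \<sigma>\<^sup>2 * (norm u)\<^sup>2 / 2)"
  have "(\<integral>\<^sup>+z. ennreal (gauss_pdf \<sigma> z * exp (l * (z \<bullet> u))) \<partial>lborel)
      = (\<integral>\<^sup>+z. ennreal K * ennreal (gauss_pdf \<sigma> (z - a)) \<partial>lborel)"
    unfolding gauss_pdf_mult_exp_inner[OF assms] a_def K_def
    by (intro nn_integral_cong) (simp add: ennreal_mult')
  also have "\<dots> = ennreal K * (\<integral>\<^sup>+z. ennreal (gauss_pdf \<sigma> (z - a)) \<partial>lborel)"
    by (rule nn_integral_cmult) simp
  also have "(\<integral>\<^sup>+z. ennreal (gauss_pdf \<sigma> (z - a)) \<partial>lborel) = 1"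
    by (simp add: nn_integral_lborel_translate[where f="\<lambda>z. ennreal (gauss_pdf \<sigma> z)"]
        nn_integral_gauss_pdf[OF assms])
  finally show ?thesis
    by (simp add: K_def)
qed

lemma nn_integral_gauss_conv:
  fixes Q :: "'a::euclidean_space measure"
  assumes "sigma_finite_measure Q" and sets_Q[measurable_cong]: "sets Q = sets borel"
    and "\<sigma> > 0" and [measurable]: "H \<in> borel_measurable borel"
  shows "(\<integral>\<^sup>+y. H y \<partial>gauss_conv Q \<sigma>)
       = (\<integral>\<^sup>+y. H y * (\<integral>\<^sup>+m. gauss_pdf \<sigma> (y - m) \<partial>Q) \<partial>lborel)"
proof -
  interpret Q: sigma_finite_measure Q by fact
  interpret G: prob_space "gauss_measure \<sigma> :: 'a measure"
    using prob_space_gauss_measure[OF \<open>\<sigma> > 0\<close>] .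
  interpret QL: pair_sigma_finite Q "lborel :: 'a measure" ..
  have [measurable_cong]: "sets (gauss_measure \<sigma> :: 'a measure) = sets borel"
    by (simp add: gauss_measure_def)
  have translate: "(\<integral>\<^sup>+z. H (m + z) \<partial>gauss_measure \<sigma>) = (\<integral>\<^sup>+y. gauss_pdf \<sigma> (y - m) * H y \<partial>lborel)"
    for m :: 'a
  proof -
    have "(\<integral>\<^sup>+z. H (m + z) \<partial>gauss_measure \<sigma>) = (\<integral>\<^sup>+z. gauss_pdf \<sigma> z * H (m + z) \<partial>lborel)"
      unfolding gauss_measure_def by (rule nn_integral_density) measurable
    also have "\<dots> = (\<integral>\<^sup>+y. gauss_pdf \<sigma> (y - m) * H (m + (y - m)) \<partial>lborel)"
      by (rule nn_integral_lborel_translate[symmetric]) measurable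
    finally show ?thesis by simp
  qed
  have "(\<integral>\<^sup>+y. H y \<partial>gauss_conv Q \<sigma>) = (\<integral>\<^sup>+x. H (fst x + snd x) \<partial>(Q \<Otimes>\<^sub>M gauss_measure \<sigma>))"
    unfolding gauss_conv_def by (subst nn_integral_distr) (simp_all add: case_prod_beta')
  also have "\<dots> = (\<integral>\<^sup>+m. \<integral>\<^sup>+z. H (m + z) \<partial>gauss_measure \<sigma> \<partial>Q)"
    by (subst G.nn_integral_fst[symmetric]) simp_all
  also have "\<dots> = (\<integral>\<^sup>+m. \<integral>\<^sup>+y. gauss_pdf \<sigma> (y - m) * H y \<partial>lborel \<partial>Q)"
    by (simp only: translate)
  also have "\<dots> = (\<integral>\<^sup>+y. \<integral>\<^sup>+m. H y * gauss_pdf \<sigma> (y - m) \<partial>Q \<partial>lborel)"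
    by (subst QL.Fubini') (simp_all add: mult.commute)
  also have "\<dots> = (\<integral>\<^sup>+y. H y * (\<integral>\<^sup>+m. gauss_pdf \<sigma> (y - m) \<partial>Q) \<partial>lborel)"
    by (simp add: nn_integral_cmult)
  finally show ?thesis .
qed

lemma gauss_conv_density_pos_finite:
  fixes Q :: "'a::euclidean_space measure"
  assumes "prob_space Q" and sets_Q[measurable_cong]: "sets Q = sets borel" and "\<sigma> > 0"
  shows "(\<integral>\<^sup>+m. gauss_pdf \<sigma> (y - m) \<partial>Q) \<noteq> 0" and "(\<integral>\<^sup>+m. gauss_pdf \<sigma> (y - m) \<partial>Q) \<noteq> \<infinity>"
proof -
  interpret Q: prob_space Q by fact
  have "(AE m in Q. ennreal (gauss_pdf \<sigma> (y - m)) = 0) \<longleftrightarrow> (AE m in Q. False)"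
    using gauss_pdf_pos[OF \<open>\<sigma> > 0\<close>] by (intro AE_cong) (simp add: ennreal_eq_0_iff not_le)
  then show "(\<integral>\<^sup>+m. gauss_pdf \<sigma> (y - m) \<partial>Q) \<noteq> 0"
    by (subst nn_integral_0_iff_AE) (simp_all add: Q.AE_False)
  have "(\<integral>\<^sup>+m. gauss_pdf \<sigma> (y - m) \<partial>Q) \<le> (\<integral>\<^sup>+m. gauss_pdf \<sigma> (0::'a) \<partial>Q)"
    by (intro nn_integral_mono ennreal_leI gauss_pdf_le_gauss_pdf_0)
  then show "(\<integral>\<^sup>+m. gauss_pdf \<sigma> (y - m) \<partial>Q) \<noteq> \<infinity>"
    by (auto simp: Q.emeasure_space_1 top_unique)
qed

(* F need not be measurable: it is dominated by G divided by the (measurable) density of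
   gauss_conv Q sigma, and that quotient is integrated. *)
lemma nn_integral_gauss_conv_le:
  fixes Q :: "'a::euclidean_space measure" and F G :: "'a \<Rightarrow> ennreal"
  assumes "prob_space Q" and sets_Q[measurable_cong]: "sets Q = sets borel" and "\<sigma> > 0"
    and [measurable]: "G \<in> borel_measurable borel"
    and FG: "\<And>y. F y * (\<integral>\<^sup>+m. gauss_pdf \<sigma> (y - m) \<partial>Q) \<le> G y"
  shows "(\<integral>\<^sup>+y. F y \<partial>gauss_conv Q \<sigma>) \<le> (\<integral>\<^sup>+y. G y \<partial>lborel)"
proof -
  interpret Q: prob_space Q by fact
  define D where "D y = (\<integral>\<^sup>+m. gauss_pdf \<sigma> (y - m) \<partial>Q)" for y
  have D: "D y \<noteq> 0" "D y \<noteq> \<infinity>" for y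
    unfolding D_def using gauss_conv_density_pos_finite[OF assms(1-3)] by auto
  have [measurable]: "D \<in> borel_measurable borel"
    unfolding D_def by measurable
  have "F y \<le> G y / D y" for y
    using divide_right_mono_ennreal[OF FG[of y, folded D_def], of "D y"]
    by (metis mult_divide_eq_ennreal D infinity_ennreal_def)
  then have "(\<integral>\<^sup>+y. F y \<partial>gauss_conv Q \<sigma>) \<le> (\<integral>\<^sup>+y. G y / D y \<partial>gauss_conv Q \<sigma>)"
    by (intro nn_integral_mono)
  also have "\<dots> = (\<integral>\<^sup>+y. G y / D y * D y \<partial>lborel)"
    unfolding D_def
    by (rule nn_integral_gauss_conv[OF Q.sigma_finite_measure_axioms sets_Q \<open>\<sigma> > 0\<close>]) measurable
  also have "\<dots> = (\<integral>\<^sup>+y. G y \<partial>lborel)"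
    by (metis ennreal_divide_times ennreal_divide_self D infinity_ennreal_def mult.right_neutral top.not_eq_extremum)
  finally show ?thesis .
qed

lemma nn_integral_gauss_halfspace_le:
  fixes u :: "'a::euclidean_space"
  assumes "\<sigma> > 0" and "u \<noteq> 0" and "t \<ge> 0"
  shows "(\<integral>\<^sup>+z. indicator {z. t \<le> z \<bullet> u} z * ennreal (gauss_pdf \<sigma> z) \<partial>lborel)
      \<le> exp (- t\<^sup>2 / (2 * \<sigma>\<^sup>2 * (norm u)\<^sup>2))"
proof -
  define l where "l = t / (\<sigma>\<^sup>2 * (norm u)\<^sup>2)"
  have "l \<ge> 0" using \<open>t \<ge> 0\<close> by (simp add: l_def)
  have chernoff: "gauss_pdf \<sigma> z \<le> exp (- l * t) * (gauss_pdf \<sigma> z * exp (l * (z \<bullet> u)))"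
    if "t \<le> z \<bullet> u" for z
  proof -
    have "1 \<le> exp (l * (z \<bullet> u - t))"
      using \<open>l \<ge> 0\<close> that by simp
    from mult_right_mono[OF this gauss_pdf_nonneg[OF \<open>\<sigma> > 0\<close>]] show ?thesis
      by (simp add: right_diff_distrib exp_diff exp_minus field_simps)
  qed
  have "(\<integral>\<^sup>+z. indicator {z. t \<le> z \<bullet> u} z * ennreal (gauss_pdf \<sigma> z) \<partial>lborel)
      \<le> (\<integral>\<^sup>+z. ennreal (exp (- l * t) * (gauss_pdf \<sigma> z * exp (l * (z \<bullet> u)))) \<partial>lborel)"
    using chernoff by (intro nn_integral_mono) (auto simp: indicator_def intro!: ennreal_leI)
  also have "\<dots> = exp (- l * t) * exp (l\<^sup>2 * \<sigma>\<^sup>2 * (norm u)\<^sup>2 / 2)"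
    by (simp add: ennreal_mult' nn_integral_cmult nn_integral_gauss_pdf_exp_inner[OF \<open>\<sigma> > 0\<close>])
  also have "exp (- l * t) * exp (l\<^sup>2 * \<sigma>\<^sup>2 * (norm u)\<^sup>2 / 2) = exp (- t\<^sup>2 / (2 * \<sigma>\<^sup>2 * (norm u)\<^sup>2))"
    using assms by (simp add: l_def exp_add[symmetric] power2_eq_square field_simps)
  finally show ?thesis .
qed

lemma dist_le_dist_imp_inner_ge:
  fixes y \<mu> c c' :: "'a::euclidean_space"
  assumes "dist y c \<le> dist y c'"
  shows "((norm (\<mu> - c))\<^sup>2 - (norm (\<mu> - c'))\<^sup>2) / 2 \<le> (y - \<mu>) \<bullet> (c - c')"
proof -
  have "(norm ((y - \<mu>) - (c - \<mu>)))\<^sup>2 \<le> (norm ((y - \<mu>) - (c' - \<mu>)))\<^sup>2"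
    using assms by (simp add: dist_norm power_mono)
  then show ?thesis
    unfolding norm_diff_power2[of "y - \<mu>"]
    by (simp add: inner_diff_right norm_minus_commute[of \<mu>])
qed

lemma voronoi_gauss_tail_le:
  fixes \<mu> c c' :: "'a::euclidean_space"
  assumes "\<sigma> > 0" and "R \<ge> 0" and "norm (\<mu> - c') \<le> R" and "R < norm (\<mu> - c)"
    and [measurable]: "V \<in> sets borel" and closer: "\<forall>y\<in>V. dist y c \<le> dist y c'"
  shows "(\<integral>\<^sup>+y. indicator V y * ennreal (gauss_pdf \<sigma> (y - \<mu>)) \<partial>lborel)
      \<le> exp (- (norm (\<mu> - c) - R)\<^sup>2 / (8 * \<sigma>\<^sup>2))"
proof -
  define \<rho> where "\<rho> = norm (\<mu> - c)"
  define u where "u = c - c'"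
  define t where "t = (\<rho>\<^sup>2 - R\<^sup>2) / 2"
  have "u \<noteq> 0" using assms(3,4) by (auto simp: u_def)
  have "t \<ge> 0" using assms(2,4) by (simp add: t_def \<rho>_def power_mono)
  have "norm u \<le> \<rho> + R"
    using norm_triangle_ineq[of "c - \<mu>" "\<mu> - c'"] assms(3) by (simp add: u_def \<rho>_def norm_minus_commute)
  then have "(\<rho> - R)\<^sup>2 * (norm u)\<^sup>2 \<le> (\<rho> - R)\<^sup>2 * (\<rho> + R)\<^sup>2"
    by (intro mult_left_mono power_mono) auto
  also have "\<dots> = 4 * t\<^sup>2"
    by (simp add: t_def power2_eq_square algebra_simps)
  finally have exponent: "(\<rho> - R)\<^sup>2 / (8 * \<sigma>\<^sup>2) \<le> t\<^sup>2 / (2 * \<sigma>\<^sup>2 * (norm u)\<^sup>2)"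
    using \<open>\<sigma> > 0\<close> \<open>u \<noteq> 0\<close> by (simp add: field_simps)
  have "(norm (\<mu> - c'))\<^sup>2 \<le> R\<^sup>2"
    using assms(3) by (simp add: power_mono)
  then have "indicator V y \<le> (indicator {z. t \<le> z \<bullet> u} (y - \<mu>) :: ennreal)" for y
    using dist_le_dist_imp_inner_ge[of y c c' \<mu>] closer
    by (auto simp: indicator_def t_def \<rho>_def u_def power_mono)
  then have "(\<integral>\<^sup>+y. indicator V y * ennreal (gauss_pdf \<sigma> (y - \<mu>)) \<partial>lborel)
      \<le> (\<integral>\<^sup>+y. indicator {z. t \<le> z \<bullet> u} (y - \<mu>) * ennreal (gauss_pdf \<sigma> (y - \<mu>)) \<partial>lborel)"
    by (intro nn_integral_mono mult_right_mono) auto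
  also have "\<dots> = (\<integral>\<^sup>+z. indicator {z. t \<le> z \<bullet> u} z * ennreal (gauss_pdf \<sigma> z) \<partial>lborel)"
    by (rule nn_integral_lborel_translate) measurable
  also have "\<dots> \<le> exp (- t\<^sup>2 / (2 * \<sigma>\<^sup>2 * (norm u)\<^sup>2))"
    by (rule nn_integral_gauss_halfspace_le) fact+
  also have "\<dots> \<le> exp (- (\<rho> - R)\<^sup>2 / (8 * \<sigma>\<^sup>2))"
    using exponent by (intro ennreal_leI) simp
  finally show ?thesis unfolding \<rho>_def .
qed

lemma integral_weighted_power2_le:
  fixes v a :: "'x \<Rightarrow> real"
  assumes "integrable M v" "integrable M (\<lambda>x. v x * a x)" "integrable M (\<lambda>x. v x * (a x)\<^sup>2)"
    and v: "\<And>x. v x \<ge> 0"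
  shows "(\<integral>x. v x * a x \<partial>M)\<^sup>2 \<le> (\<integral>x. v x \<partial>M) * (\<integral>x. v x * (a x)\<^sup>2 \<partial>M)"
proof (cases "(\<integral>x. v x \<partial>M) = 0")
  case True
  then have "AE x in M. v x = 0"
    using integral_nonneg_eq_0_iff_AE[OF assms(1)] v by auto
  then have "(\<integral>x. v x * a x \<partial>M) = 0"
    by (intro integral_eq_zero_AE) auto
  then show ?thesis using True by simp
next
  case False
  define W where "W = (\<integral>x. v x \<partial>M)"
  define X where "X = (\<integral>x. v x * a x \<partial>M)"
  define Y where "Y = (\<integral>x. v x * (a x)\<^sup>2 \<partial>M)"
  have "W \<ge> 0"
    unfolding W_def by (rule Bochner_Integration.integral_nonneg) (simp add: v)
  with False have "W > 0"
    by (simp add: W_def)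
  have expand: "v x * (W * a x - X)\<^sup>2 = W\<^sup>2 * (v x * (a x)\<^sup>2) - (2 * W * X) * (v x * a x) + X\<^sup>2 * v x" for x
    by (simp add: power2_eq_square algebra_simps)
  have "0 \<le> (\<integral>x. v x * (W * a x - X)\<^sup>2 \<partial>M)"
    using v by (intro Bochner_Integration.integral_nonneg) simp
  also have "\<dots> = W\<^sup>2 * Y - (2 * W * X) * X + X\<^sup>2 * W"
    unfolding expand using assms(1-3) by (simp add: W_def X_def Y_def)
  finally have "W * X\<^sup>2 \<le> W * (W * Y)"
    by (simp add: power2_eq_square algebra_simps)
  then show ?thesis
    using \<open>W > 0\<close> by (simp add: W_def X_def Y_def)
qed

lemma norm_integral_weighted_power2_le:
  fixes v :: "'x \<Rightarrow> real" and a :: "'x \<Rightarrow> 'a::{banach, second_countable_topology}"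
  assumes "integrable M v" "integrable M (\<lambda>x. v x *\<^sub>R a x)" "integrable M (\<lambda>x. v x * (norm (a x))\<^sup>2)"
    and v: "\<And>x. v x \<ge> 0"
  shows "(norm (\<integral>x. v x *\<^sub>R a x \<partial>M))\<^sup>2 \<le> (\<integral>x. v x \<partial>M) * (\<integral>x. v x * (norm (a x))\<^sup>2 \<partial>M)"
proof -
  have "integrable M (\<lambda>x. v x * norm (a x))"
    using integrable_norm[OF assms(2)] v by (simp add: abs_of_nonneg)
  have "norm (\<integral>x. v x *\<^sub>R a x \<partial>M) \<le> (\<integral>x. v x * norm (a x) \<partial>M)"
    using integral_norm_bound[of M "\<lambda>x. v x *\<^sub>R a x"] v by (simp add: abs_of_nonneg)
  then have "(norm (\<integral>x. v x *\<^sub>R a x \<partial>M))\<^sup>2 \<le> (\<integral>x. v x * norm (a x) \<partial>M)\<^sup>2"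
    by (rule power_mono) simp
  also have "\<dots> \<le> (\<integral>x. v x \<partial>M) * (\<integral>x. v x * (norm (a x))\<^sup>2 \<partial>M)"
    by (rule integral_weighted_power2_le) fact+
  finally show ?thesis .
qed

lemma weighted_mean_mem_cball:
  fixes v :: "'a::euclidean_space \<Rightarrow> real"
  assumes "integrable M v" "integrable M (\<lambda>x. v x *\<^sub>R x)" "0 < (\<integral>x. v x \<partial>M)"
    and v: "\<And>x. v x \<ge> 0" and supp: "\<And>x. v x \<noteq> 0 \<Longrightarrow> x \<in> cball c r"
  shows "(\<integral>x. v x *\<^sub>R x \<partial>M) /\<^sub>R (\<integral>x. v x \<partial>M) \<in> cball c r"
proof -
  define Z where "Z = (\<integral>x. v x \<partial>M)"
  define A where "A = (\<integral>x. v x *\<^sub>R x \<partial>M)"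
  have "Z > 0" using assms(3) by (simp add: Z_def)
  have "A - Z *\<^sub>R c = (\<integral>x. v x *\<^sub>R (x - c) \<partial>M)"
    using assms(1,2) by (simp add: A_def Z_def scaleR_diff_right)
  also have "norm \<dots> \<le> (\<integral>x. norm (v x *\<^sub>R (x - c)) \<partial>M)"
    by (rule integral_norm_bound)
  also have "\<dots> \<le> (\<integral>x. r * v x \<partial>M)"
  proof (rule integral_mono)
    show "integrable M (\<lambda>x. norm (v x *\<^sub>R (x - c)))"
      using assms(1,2) by (intro integrable_norm) (simp add: scaleR_diff_right)
    show "norm (v x *\<^sub>R (x - c)) \<le> r * v x" for x
      using supp[of x] v[of x] by (cases "v x = 0") (auto simp: dist_norm norm_minus_commute)
  qed (use assms(1) in simp)
  also have "\<dots> = r * Z"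
    by (simp add: Z_def)
  finally have bound: "norm (A - Z *\<^sub>R c) \<le> r * Z" .
  have "dist c (A /\<^sub>R Z) = norm (A /\<^sub>R Z - c)"
    by (simp add: dist_norm norm_minus_commute)
  also have "A /\<^sub>R Z - c = (1 / Z) *\<^sub>R (A - Z *\<^sub>R c)"
    using \<open>Z > 0\<close> by (simp add: scaleR_diff_right inverse_eq_divide)
  also have "norm \<dots> = norm (A - Z *\<^sub>R c) / Z"
    using \<open>Z > 0\<close> by simp
  finally show ?thesis
    using bound \<open>Z > 0\<close> by (simp add: A_def Z_def pos_divide_le_eq mult.commute)
qed

lemma mult_norm_scaleR_inverse_diff_power2:
  fixes A m :: "'a::real_normed_vector"
  assumes "Z > 0"
  shows "Z * (norm (A /\<^sub>R Z - m))\<^sup>2 = (norm (A - Z *\<^sub>R m))\<^sup>2 / Z"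
proof -
  have "A /\<^sub>R Z - m = (1 / Z) *\<^sub>R (A - Z *\<^sub>R m)"
    using assms by (simp add: scaleR_diff_right inverse_eq_divide)
  then show ?thesis
    using assms by (simp add: power2_eq_square)
qed

lemma norm_diff_power2_le_of_mem_cball:
  assumes "m \<in> cball c r"
  shows "(norm (\<mu> - m))\<^sup>2 \<le> 2 * (norm (\<mu> - c))\<^sup>2 + 2 * r\<^sup>2"
proof -
  have "norm (\<mu> - m) \<le> norm (\<mu> - c) + r"
    using norm_triangle_ineq[of "\<mu> - c" "c - m"] assms by (simp add: dist_norm)
  then have "(norm (\<mu> - m))\<^sup>2 \<le> (norm (\<mu> - c) + r)\<^sup>2"
    by (rule power_mono) simp
  also have "\<dots> \<le> 2 * (norm (\<mu> - c))\<^sup>2 + 2 * r\<^sup>2"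
    using sum_squares_bound[of "norm (\<mu> - c)" r] by (simp add: power2_sum)
  finally show ?thesis .
qed

(* For mu outside the ball this bounds |mu - m|^2 uniformly in m \<in> cball c r. *)
definition tail_weight :: "'a::euclidean_space \<Rightarrow> real \<Rightarrow> 'a \<Rightarrow> real" where
  "tail_weight c r \<mu> = indicator (- cball c r) \<mu> * (2 * (norm (\<mu> - c))\<^sup>2 + 2 * r\<^sup>2)"

lemma tail_weight_nonneg: "tail_weight c r \<mu> \<ge> 0"
  by (simp add: tail_weight_def)

lemma borel_measurable_tail_weight[measurable]: "tail_weight c r \<in> borel_measurable borel"
  unfolding tail_weight_def[abs_def] by measurable

lemma mult_exp_neg_square_le:
  fixes a v \<sigma> :: real
  assumes "\<sigma> > 0" and "a \<ge> 0"
  shows "(a + 4 * v\<^sup>2) * exp (- v\<^sup>2 / (8 * \<sigma>\<^sup>2)) \<le> a + 32 * \<sigma>\<^sup>2"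
proof -
  define x where "x = v\<^sup>2 / (8 * \<sigma>\<^sup>2)"
  have "x \<le> exp x"
    using exp_ge_add_one_self[of x] by linarith
  then have "x * exp (- x) \<le> 1"
    by (simp add: exp_minus field_simps)
  have "(a + 4 * v\<^sup>2) * exp (- v\<^sup>2 / (8 * \<sigma>\<^sup>2)) = a * exp (- x) + 32 * \<sigma>\<^sup>2 * (x * exp (- x))"
    using \<open>\<sigma> > 0\<close> by (simp add: x_def field_simps)
  also have "\<dots> \<le> a + 32 * \<sigma>\<^sup>2"
    using \<open>x * exp (- x) \<le> 1\<close> \<open>a \<ge> 0\<close> by (intro add_mono mult_left_le) (auto simp: x_def)
  finally show ?thesis .
qed

lemma tail_weight_exp_bound:
  fixes \<sigma> R r \<rho> L :: real
  assumes "\<sigma> > 0" and "R \<ge> 0" and "L \<ge> 0" and margin: "2 * sqrt 2 * \<sigma> * sqrt L \<le> r - R"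
    and "r < \<rho>"
  shows "(2 * \<rho>\<^sup>2 + 2 * r\<^sup>2) * exp (- (\<rho> - R)\<^sup>2 / (8 * \<sigma>\<^sup>2)) \<le> (32 * \<sigma>\<^sup>2 + 6 * r\<^sup>2) * exp (- L)"
proof -
  define s where "s = r - R"
  define v where "v = \<rho> - r"
  have "0 \<le> 2 * sqrt 2 * \<sigma> * sqrt L"
    using assms(1,3) by simp
  then have "s \<ge> 0" and "v \<ge> 0"
    using margin \<open>r < \<rho>\<close> unfolding s_def v_def by linarith+
  have "8 * \<sigma>\<^sup>2 * L = (2 * sqrt 2 * \<sigma> * sqrt L)\<^sup>2"
    using \<open>L \<ge> 0\<close> by (simp add: power_mult_distrib)
  also have "\<dots> \<le> s\<^sup>2"
    using margin \<open>0 \<le> 2 * sqrt 2 * \<sigma> * sqrt L\<close> by (intro power_mono) (simp_all add: s_def)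
  finally have "L \<le> s\<^sup>2 / (8 * \<sigma>\<^sup>2)"
    using \<open>\<sigma> > 0\<close> by (simp add: field_simps)
  moreover have "(\<rho> - R)\<^sup>2 = s\<^sup>2 + v\<^sup>2 + 2 * s * v"
    by (simp add: s_def v_def power2_eq_square algebra_simps)
  then have "(s\<^sup>2 + v\<^sup>2) / (8 * \<sigma>\<^sup>2) \<le> (\<rho> - R)\<^sup>2 / (8 * \<sigma>\<^sup>2)"
    using \<open>s \<ge> 0\<close> \<open>v \<ge> 0\<close> by (intro divide_right_mono) simp_all
  ultimately have "L + v\<^sup>2 / (8 * \<sigma>\<^sup>2) \<le> (\<rho> - R)\<^sup>2 / (8 * \<sigma>\<^sup>2)"
    by (simp add: add_divide_distrib)
  then have "exp (- (\<rho> - R)\<^sup>2 / (8 * \<sigma>\<^sup>2)) \<le> exp (- L) * exp (- v\<^sup>2 / (8 * \<sigma>\<^sup>2))"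
    by (simp add: exp_add[symmetric])
  moreover have "2 * \<rho>\<^sup>2 + 2 * r\<^sup>2 \<le> 6 * r\<^sup>2 + 4 * v\<^sup>2"
    using sum_squares_bound[of r v] by (simp add: v_def power2_eq_square algebra_simps)
  ultimately have "(2 * \<rho>\<^sup>2 + 2 * r\<^sup>2) * exp (- (\<rho> - R)\<^sup>2 / (8 * \<sigma>\<^sup>2))
      \<le> (6 * r\<^sup>2 + 4 * v\<^sup>2) * (exp (- L) * exp (- v\<^sup>2 / (8 * \<sigma>\<^sup>2)))"
    by (intro mult_mono) simp_all
  also have "\<dots> = (6 * r\<^sup>2 + 4 * v\<^sup>2) * exp (- v\<^sup>2 / (8 * \<sigma>\<^sup>2)) * exp (- L)"
    by (simp add: ac_simps)
  also have "\<dots> \<le> (32 * \<sigma>\<^sup>2 + 6 * r\<^sup>2) * exp (- L)"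
    using mult_exp_neg_square_le[OF \<open>\<sigma> > 0\<close>, of "6 * r\<^sup>2" v] by (simp add: add.commute)
  finally show ?thesis .
qed

lemma tail_weight_mult_voronoi_gauss_tail_le:
  fixes \<mu> c :: "'a::euclidean_space"
  assumes "\<sigma> > 0" and "0 \<le> R" and "R < r" and near: "\<exists>c'\<in>C. \<mu> \<in> cball c' R"
    and [measurable]: "V \<in> sets borel" and closer: "\<forall>y\<in>V. \<forall>c'\<in>C. dist y c \<le> dist y c'"
    and K: "\<And>\<rho>. r < \<rho> \<Longrightarrow> (2 * \<rho>\<^sup>2 + 2 * r\<^sup>2) * exp (- (\<rho> - R)\<^sup>2 / (8 * \<sigma>\<^sup>2)) \<le> K"
  shows "ennreal (tail_weight c r \<mu>) * (\<integral>\<^sup>+y. indicator V y * ennreal (gauss_pdf \<sigma> (y - \<mu>)) \<partial>lborel) \<le> K"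
proof (cases "\<mu> \<in> cball c r")
  case True
  then show ?thesis by (simp add: tail_weight_def)
next
  case False
  then have far: "r < norm (\<mu> - c)"
    by (simp add: dist_norm norm_minus_commute)
  obtain c' where "c' \<in> C" "norm (\<mu> - c') \<le> R"
    using near by (auto simp: dist_norm norm_minus_commute)
  then have "(\<integral>\<^sup>+y. indicator V y * ennreal (gauss_pdf \<sigma> (y - \<mu>)) \<partial>lborel)
      \<le> exp (- (norm (\<mu> - c) - R)\<^sup>2 / (8 * \<sigma>\<^sup>2))"
    using far closer assms(1-3) by (intro voronoi_gauss_tail_le) auto
  then have "ennreal (tail_weight c r \<mu>) * (\<integral>\<^sup>+y. indicator V y * ennreal (gauss_pdf \<sigma> (y - \<mu>)) \<partial>lborel)
      \<le> ennreal (tail_weight c r \<mu> * exp (- (norm (\<mu> - c) - R)\<^sup>2 / (8 * \<sigma>\<^sup>2)))"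
    by (simp add: ennreal_mult' tail_weight_nonneg mult_left_mono)
  also have "\<dots> \<le> K"
    using K[OF far] False by (intro ennreal_leI) (simp add: tail_weight_def)
  finally show ?thesis .
qed

lemma nn_integral_voronoi_cell_le:
  fixes Q :: "'a::euclidean_space measure"
  assumes "prob_space Q" and sets_Q[measurable_cong]: "sets Q = sets borel"
    and "\<sigma> > 0" and "0 \<le> R" and "R < r"
    and cover: "AE \<mu> in Q. \<exists>c'\<in>C. \<mu> \<in> cball c' R"
    and [measurable]: "V \<in> sets borel" and closer: "\<forall>y\<in>V. \<forall>c'\<in>C. dist y c \<le> dist y c'"
    and K: "\<And>\<rho>. r < \<rho> \<Longrightarrow> (2 * \<rho>\<^sup>2 + 2 * r\<^sup>2) * exp (- (\<rho> - R)\<^sup>2 / (8 * \<sigma>\<^sup>2)) \<le> K"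
  shows "(\<integral>\<^sup>+y. indicator V y * (\<integral>\<^sup>+\<mu>. ennreal (gauss_pdf \<sigma> (y - \<mu>) * tail_weight c r \<mu>) \<partial>Q) \<partial>lborel)
    \<le> K"
proof -
  interpret Q: prob_space Q by fact
  interpret QL: pair_sigma_finite Q "lborel :: 'a measure" ..
  have "(\<integral>\<^sup>+y. indicator V y * (\<integral>\<^sup>+\<mu>. ennreal (gauss_pdf \<sigma> (y - \<mu>) * tail_weight c r \<mu>) \<partial>Q) \<partial>lborel)
      = (\<integral>\<^sup>+y. \<integral>\<^sup>+\<mu>. ennreal (tail_weight c r \<mu>) * (indicator V y * ennreal (gauss_pdf \<sigma> (y - \<mu>))) \<partial>Q \<partial>lborel)"
    by (auto simp: nn_integral_cmult[symmetric] ennreal_mult' tail_weight_nonneg ac_simps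
        intro!: nn_integral_cong)
  also have "\<dots> = (\<integral>\<^sup>+\<mu>. ennreal (tail_weight c r \<mu>) * (\<integral>\<^sup>+y. indicator V y * ennreal (gauss_pdf \<sigma> (y - \<mu>)) \<partial>lborel) \<partial>Q)"
    by (subst QL.Fubini') (simp_all add: nn_integral_cmult)
  also have "\<dots> \<le> (\<integral>\<^sup>+\<mu>. K \<partial>Q)"
    by (rule nn_integral_mono_AE, use cover in eventually_elim)
      (rule tail_weight_mult_voronoi_gauss_tail_le[OF assms(3-5) _ assms(7) closer K])
  also have "\<dots> = K"
    by (simp add: Q.emeasure_space_1)
  finally show ?thesis .
qed

lemma post_mean_cond_measure:
  fixes Q :: "'a::euclidean_space measure"
  assumes [measurable_cong]: "sets Q = sets borel" and [measurable]: "S \<in> sets borel"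
    and "measure Q S > 0"
  shows "post_mean (cond_measure Q S) \<sigma> y
    = (\<integral>\<mu>. (indicator S \<mu> * gauss_pdf \<sigma> (y - \<mu>)) *\<^sub>R \<mu> \<partial>Q)
      /\<^sub>R (\<integral>\<mu>. indicator S \<mu> * gauss_pdf \<sigma> (y - \<mu>) \<partial>Q)"
proof -
  define q where "q = measure Q S"
  have cond_integral: "(\<integral>\<mu>. f \<mu> \<partial>cond_measure Q S) = (1 / q) *\<^sub>R (\<integral>\<mu>. indicator S \<mu> *\<^sub>R f \<mu> \<partial>Q)"
    if [measurable]: "f \<in> borel_measurable borel" for f :: "'a \<Rightarrow> 'b::{banach, second_countable_topology}"
  proof -
    have "(\<integral>\<mu>. f \<mu> \<partial>cond_measure Q S) = (\<integral>\<mu>. (indicator S \<mu> / q) *\<^sub>R f \<mu> \<partial>Q)"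
      unfolding cond_measure_def q_def[symmetric]
      using \<open>measure Q S > 0\<close> by (intro integral_density) (auto simp: q_def)
    also have "\<dots> = (\<integral>\<mu>. (1 / q) *\<^sub>R (indicator S \<mu> *\<^sub>R f \<mu>) \<partial>Q)"
      by (rule Bochner_Integration.integral_cong) auto
    finally show ?thesis
      by (simp only: integral_scaleR_right)
  qed
  show ?thesis
    unfolding post_mean_def
    using \<open>measure Q S > 0\<close> by (simp add: cond_integral q_def inverse_eq_divide)
qed

locale bounded_support_prob = prob_space Q for Q :: "'a::euclidean_space measure" +
  assumes sets_Q[measurable_cong]: "sets Q = sets borel"
    and bounded_support: "\<exists>B. bounded B \<and> B \<in> sets borel \<and> emeasure Q B = 1"
begin

lemma integrable_continuous:
  fixes f :: "'a \<Rightarrow> 'b::{banach, second_countable_topology}"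
  assumes "continuous_on UNIV f"
  shows "integrable Q f"
proof -
  obtain B where B: "bounded B" "B \<in> sets borel" "emeasure Q B = 1"
    using bounded_support by blast
  then obtain x0 M where "B \<subseteq> cball x0 M"
    unfolding bounded_subset_cball by blast
  moreover have "bounded (f ` cball x0 M)"
    using assms by (intro compact_imp_bounded compact_continuous_image) (auto intro: continuous_on_subset)
  then obtain K where "\<forall>x\<in>cball x0 M. norm (f x) \<le> K"
    unfolding bounded_iff by auto
  moreover have "AE x in Q. x \<in> B"
    using B by (intro AE_prob_1) (simp add: measure_def)
  ultimately have "AE x in Q. norm (f x) \<le> K"
    by (auto elim: AE_mp)
  moreover have "f \<in> borel_measurable Q"
    using borel_measurable_continuous_onI[OF assms] by simp
  ultimately show ?thesis
    by (rule integrable_const_bound)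
qed

lemma integrable_indicator_continuous:
  fixes f :: "'a \<Rightarrow> 'b::{banach, second_countable_topology}"
  assumes "A \<in> sets borel" "continuous_on UNIV f"
  shows "integrable Q (\<lambda>x. indicator A x *\<^sub>R f x)"
  using assms by (intro integrable_mult_indicator integrable_continuous) auto

lemma weighted_mean_deviation_le:
  fixes w :: "'a \<Rightarrow> real"
  assumes w: "continuous_on UNIV w" "\<And>\<mu>. w \<mu> \<ge> 0" and Z: "0 < (\<integral>\<mu>. w \<mu> \<partial>Q)"
    and [measurable]: "S \<in> sets borel"
    and balanced: "(\<integral>\<mu>. (indicator S \<mu> * w \<mu>) *\<^sub>R (\<mu> - m) \<partial>Q) = 0"
  shows "(\<integral>\<mu>. w \<mu> \<partial>Q) * (norm ((\<integral>\<mu>. w \<mu> *\<^sub>R \<mu> \<partial>Q) /\<^sub>R (\<integral>\<mu>. w \<mu> \<partial>Q) - m))\<^sup>2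
    \<le> (\<integral>\<mu>. w \<mu> * (indicator (- S) \<mu> * (norm (\<mu> - m))\<^sup>2) \<partial>Q)"
proof -
  define Z where "Z = (\<integral>\<mu>. w \<mu> \<partial>Q)"
  define A where "A = (\<integral>\<mu>. w \<mu> *\<^sub>R \<mu> \<partial>Q)"
  define a where "a \<mu> = indicator (- S) \<mu> *\<^sub>R (\<mu> - m)" for \<mu>
  have cont: "continuous_on UNIV (\<lambda>\<mu>. w \<mu> *\<^sub>R (\<mu> - m))"
    using w(1) by (intro continuous_intros)
  have int_in: "integrable Q (\<lambda>\<mu>. (indicator S \<mu> * w \<mu>) *\<^sub>R (\<mu> - m))"
    using integrable_indicator_continuous[OF _ cont, of S] by simp
  have "(\<lambda>\<mu>. w \<mu> *\<^sub>R a \<mu>) = (\<lambda>\<mu>. indicator (- S) \<mu> *\<^sub>R (w \<mu> *\<^sub>R (\<mu> - m)))"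
    by (auto simp: a_def fun_eq_iff)
  then have int_out: "integrable Q (\<lambda>\<mu>. w \<mu> *\<^sub>R a \<mu>)"
    using integrable_indicator_continuous[OF _ cont, of "- S"] by simp
  have "(\<lambda>\<mu>. w \<mu> * (norm (a \<mu>))\<^sup>2) = (\<lambda>\<mu>. indicator (- S) \<mu> *\<^sub>R (w \<mu> * (norm (\<mu> - m))\<^sup>2))"
    by (auto simp: a_def fun_eq_iff indicator_def)
  moreover have "integrable Q (\<lambda>\<mu>. indicator (- S) \<mu> *\<^sub>R (w \<mu> * (norm (\<mu> - m))\<^sup>2))"
    using w(1) by (intro integrable_indicator_continuous continuous_intros) auto
  ultimately have int_out_sq: "integrable Q (\<lambda>\<mu>. w \<mu> * (norm (a \<mu>))\<^sup>2)"
    by simp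
  have split: "w \<mu> *\<^sub>R (\<mu> - m) = (indicator S \<mu> * w \<mu>) *\<^sub>R (\<mu> - m) + w \<mu> *\<^sub>R a \<mu>" for \<mu>
    by (simp add: a_def indicator_def)
  have "A - Z *\<^sub>R m = (\<integral>\<mu>. w \<mu> *\<^sub>R (\<mu> - m) \<partial>Q)"
    using integrable_continuous[OF w(1)] integrable_continuous[of "\<lambda>\<mu>. w \<mu> *\<^sub>R \<mu>"] w(1)
    by (simp add: A_def Z_def scaleR_diff_right continuous_intros)
  also have "\<dots> = (\<integral>\<mu>. (indicator S \<mu> * w \<mu>) *\<^sub>R (\<mu> - m) \<partial>Q) + (\<integral>\<mu>. w \<mu> *\<^sub>R a \<mu> \<partial>Q)"
    unfolding split by (rule Bochner_Integration.integral_add) fact+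
  also have "\<dots> = (\<integral>\<mu>. w \<mu> *\<^sub>R a \<mu> \<partial>Q)"
    by (simp add: balanced)
  finally have deviation: "A - Z *\<^sub>R m = (\<integral>\<mu>. w \<mu> *\<^sub>R a \<mu> \<partial>Q)" .
  have "Z * (norm (A /\<^sub>R Z - m))\<^sup>2 = (norm (\<integral>\<mu>. w \<mu> *\<^sub>R a \<mu> \<partial>Q))\<^sup>2 / Z"
    using Z unfolding deviation[symmetric] Z_def[symmetric] by (rule mult_norm_scaleR_inverse_diff_power2)
  also have "\<dots> \<le> Z * (\<integral>\<mu>. w \<mu> * (norm (a \<mu>))\<^sup>2 \<partial>Q) / Z"
    using Z unfolding Z_def
    by (intro divide_right_mono norm_integral_weighted_power2_le integrable_continuous w int_out int_out_sq) auto
  also have "\<dots> = (\<integral>\<mu>. w \<mu> * (indicator (- S) \<mu> * (norm (\<mu> - m))\<^sup>2) \<partial>Q)"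
    using Z unfolding Z_def[symmetric] by (auto simp: a_def indicator_def intro: Bochner_Integration.integral_cong)
  finally show ?thesis
    by (simp only: A_def Z_def)
qed

lemma integrable_gauss_pdf_tail_weight:
  assumes "\<sigma> > 0"
  shows "integrable Q (\<lambda>\<mu>. gauss_pdf \<sigma> (y - \<mu>) * tail_weight c r \<mu>)"
  using integrable_indicator_continuous[of "- cball c r" "\<lambda>\<mu>. gauss_pdf \<sigma> (y - \<mu>) * (2 * (norm (\<mu> - c))\<^sup>2 + 2 * r\<^sup>2)"] assms
  by (simp add: tail_weight_def continuous_intros ac_simps)

lemma post_mean_cond_cball:
  fixes y :: 'a
  assumes "\<sigma> > 0" and pos: "measure Q (cball c r) > 0"
  defines "m \<equiv> post_mean (cond_measure Q (cball c r)) \<sigma> y"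
  shows "m \<in> cball c r"
    and "(\<integral>\<mu>. (indicator (cball c r) \<mu> * gauss_pdf \<sigma> (y - \<mu>)) *\<^sub>R (\<mu> - m) \<partial>Q) = 0"
proof -
  define v where "v \<mu> = indicator (cball c r) \<mu> * gauss_pdf \<sigma> (y - \<mu>)" for \<mu>
  have v_pos: "v \<mu> > 0" if "\<mu> \<in> cball c r" for \<mu>
    using that \<open>\<sigma> > 0\<close> by (simp add: v_def gauss_pdf_pos)
  have v_nonneg: "v \<mu> \<ge> 0" for \<mu>
    using \<open>\<sigma> > 0\<close> by (simp add: v_def gauss_pdf_nonneg)
  have int_v: "integrable Q v"
    unfolding v_def[abs_def] using \<open>\<sigma> > 0\<close>
    by (intro integrable_indicator_continuous[of _ "\<lambda>\<mu>. gauss_pdf \<sigma> (y - \<mu>)", simplified]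
        continuous_intros) auto
  have int_vx: "integrable Q (\<lambda>\<mu>. v \<mu> *\<^sub>R \<mu>)"
    using integrable_indicator_continuous[of "cball c r" "\<lambda>\<mu>. gauss_pdf \<sigma> (y - \<mu>) *\<^sub>R \<mu>"] \<open>\<sigma> > 0\<close>
    by (simp add: v_def continuous_intros)
  have ZS: "0 < (\<integral>\<mu>. v \<mu> \<partial>Q)"
    using pos v_pos v_nonneg
    by (intro integral_less_AE[OF integrable_zero int_v, of "cball c r", simplified])
      (auto simp: measure_def less_imp_neq[symmetric])
  have m_eq: "m = (\<integral>\<mu>. v \<mu> *\<^sub>R \<mu> \<partial>Q) /\<^sub>R (\<integral>\<mu>. v \<mu> \<partial>Q)"
    using post_mean_cond_measure[OF sets_Q, of "cball c r" \<sigma> y] pos by (simp add: m_def v_def)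
  show "m \<in> cball c r"
    unfolding m_eq using int_v int_vx ZS v_nonneg
    by (rule weighted_mean_mem_cball) (auto simp: v_def indicator_def)
  have "(\<integral>\<mu>. v \<mu> *\<^sub>R (\<mu> - m) \<partial>Q) = 0"
    using int_v int_vx ZS by (simp add: m_eq scaleR_diff_right)
  then show "(\<integral>\<mu>. (indicator (cball c r) \<mu> * gauss_pdf \<sigma> (y - \<mu>)) *\<^sub>R (\<mu> - m) \<partial>Q) = 0"
    by (simp add: v_def)
qed

lemma post_mean_cond_cball_error:
  assumes "\<sigma> > 0" and "r \<ge> 0" and pos: "measure Q (cball c r) > 0"
  shows "(\<integral>\<mu>. gauss_pdf \<sigma> (y - \<mu>) \<partial>Q)
      * (norm (post_mean Q \<sigma> y - post_mean (cond_measure Q (cball c r)) \<sigma> y))\<^sup>2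
    \<le> (\<integral>\<mu>. gauss_pdf \<sigma> (y - \<mu>) * tail_weight c r \<mu> \<partial>Q)"
proof -
  define m where "m = post_mean (cond_measure Q (cball c r)) \<sigma> y"
  define w where "w \<mu> = gauss_pdf \<sigma> (y - \<mu>)" for \<mu>
  have w_cont: "continuous_on UNIV w" and w_pos: "\<And>\<mu>. w \<mu> > 0"
    using \<open>\<sigma> > 0\<close> by (auto simp: w_def gauss_pdf_pos intro!: continuous_intros)
  have Z: "0 < (\<integral>\<mu>. w \<mu> \<partial>Q)"
    using w_pos by (intro integral_less_AE_space[OF integrable_zero integrable_continuous[OF w_cont], simplified])
      (auto simp: emeasure_space_1)
  note m_cball = post_mean_cond_cball[OF \<open>\<sigma> > 0\<close> pos, of y, folded m_def w_def]
  have "(\<integral>\<mu>. w \<mu> \<partial>Q) * (norm (post_mean Q \<sigma> y - m))\<^sup>2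
      \<le> (\<integral>\<mu>. w \<mu> * (indicator (- cball c r) \<mu> * (norm (\<mu> - m))\<^sup>2) \<partial>Q)"
    unfolding post_mean_def w_def[symmetric]
    using w_pos m_cball(2) by (intro weighted_mean_deviation_le[OF w_cont _ Z]) (auto simp: less_imp_le)
  also have "\<dots> \<le> (\<integral>\<mu>. w \<mu> * tail_weight c r \<mu> \<partial>Q)"
  proof (rule integral_mono)
    show "integrable Q (\<lambda>\<mu>. w \<mu> * (indicator (- cball c r) \<mu> * (norm (\<mu> - m))\<^sup>2))"
      using integrable_indicator_continuous[of "- cball c r" "\<lambda>\<mu>. w \<mu> * (norm (\<mu> - m))\<^sup>2"] w_cont
      by (simp add: continuous_intros ac_simps)
    show "integrable Q (\<lambda>\<mu>. w \<mu> * tail_weight c r \<mu>)"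
      unfolding w_def using \<open>\<sigma> > 0\<close> by (rule integrable_gauss_pdf_tail_weight)
    show "w \<mu> * (indicator (- cball c r) \<mu> * (norm (\<mu> - m))\<^sup>2) \<le> w \<mu> * tail_weight c r \<mu>" for \<mu>
      using norm_diff_power2_le_of_mem_cball[OF m_cball(1), of \<mu>] w_pos[of \<mu>]
      by (auto simp: tail_weight_def indicator_def)
  qed
  finally show ?thesis
    by (simp add: m_def w_def)
qed

lemma nn_integral_gauss_conv_local_error_le:
  assumes "\<sigma> > 0" and "r \<ge> 0" and "finite C" and [measurable]: "\<And>c. c \<in> C \<Longrightarrow> V c \<in> sets borel"
    and cells_cover: "(\<Union>c\<in>C. V c) = UNIV" and pos: "\<forall>c\<in>C. measure Q (cball c r) > 0"
    and floc: "\<forall>c\<in>C. \<forall>y\<in>V c. floc y = post_mean (cond_measure Q (cball c r)) \<sigma> y"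
  shows "(\<integral>\<^sup>+y. ennreal ((norm (post_mean Q \<sigma> y - floc y))\<^sup>2) \<partial>gauss_conv Q \<sigma>)
    \<le> (\<Sum>c\<in>C. \<integral>\<^sup>+y. indicator (V c) y
          * (\<integral>\<^sup>+\<mu>. ennreal (gauss_pdf \<sigma> (y - \<mu>) * tail_weight c r \<mu>) \<partial>Q) \<partial>lborel)"
proof -
  define T where "T c y = (\<integral>\<^sup>+\<mu>. ennreal (gauss_pdf \<sigma> (y - \<mu>) * tail_weight c r \<mu>) \<partial>Q)" for c y
  have pointwise: "ennreal ((norm (post_mean Q \<sigma> y - floc y))\<^sup>2) * (\<integral>\<^sup>+m. gauss_pdf \<sigma> (y - m) \<partial>Q)
      \<le> (\<Sum>c\<in>C. indicator (V c) y * T c y)" for y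
  proof -
    obtain c where "c \<in> C" "y \<in> V c"
      using cells_cover by blast
    have "ennreal ((norm (post_mean Q \<sigma> y - floc y))\<^sup>2) * (\<integral>\<^sup>+m. gauss_pdf \<sigma> (y - m) \<partial>Q)
        = ennreal ((\<integral>\<mu>. gauss_pdf \<sigma> (y - \<mu>) \<partial>Q) * (norm (post_mean Q \<sigma> y - floc y))\<^sup>2)"
      using integrable_continuous[of "\<lambda>\<mu>. gauss_pdf \<sigma> (y - \<mu>)"] \<open>\<sigma> > 0\<close>
      by (simp add: nn_integral_eq_integral gauss_pdf_nonneg ennreal_mult' mult.commute continuous_intros)
    also have "\<dots> \<le> ennreal (\<integral>\<mu>. gauss_pdf \<sigma> (y - \<mu>) * tail_weight c r \<mu> \<partial>Q)"
      using post_mean_cond_cball_error[OF \<open>\<sigma> > 0\<close> \<open>r \<ge> 0\<close>, of c y] pos floc \<open>c \<in> C\<close> \<open>y \<in> V c\<close>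
      by (intro ennreal_leI) simp
    also have "\<dots> = indicator (V c) y * T c y"
      using integrable_gauss_pdf_tail_weight[OF \<open>\<sigma> > 0\<close>] \<open>\<sigma> > 0\<close> \<open>y \<in> V c\<close>
      by (simp add: T_def nn_integral_eq_integral gauss_pdf_nonneg tail_weight_nonneg)
    also have "\<dots> \<le> (\<Sum>c\<in>C. indicator (V c) y * T c y)"
      using \<open>c \<in> C\<close> \<open>finite C\<close> by (intro member_le_sum) auto
    finally show ?thesis .
  qed
  have "(\<integral>\<^sup>+y. ennreal ((norm (post_mean Q \<sigma> y - floc y))\<^sup>2) \<partial>gauss_conv Q \<sigma>)
      \<le> (\<integral>\<^sup>+y. (\<Sum>c\<in>C. indicator (V c) y * T c y) \<partial>lborel)"
    by (rule nn_integral_gauss_conv_le[OF prob_space_axioms sets_Q \<open>\<sigma> > 0\<close> _ pointwise])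
      (unfold T_def, measurable)
  also have "\<dots> = (\<Sum>c\<in>C. \<integral>\<^sup>+y. indicator (V c) y * T c y \<partial>lborel)"
    by (rule nn_integral_sum) (unfold T_def, measurable)
  finally show ?thesis
    by (simp add: T_def)
qed

end

lemma warm_starts_card_ge_1: "warm_starts Q R C \<Longrightarrow> card C \<ge> 1"
  by (cases "C = {}") (auto simp: warm_starts_def Suc_le_eq card_gt_0_iff)

lemma warm_starts_AE_near:
  assumes "prob_space Q" and "sets Q = sets borel" and "warm_starts Q R C"
  shows "AE \<mu> in Q. \<exists>c\<in>C. \<mu> \<in> cball c R"
proof -
  interpret Q: prob_space Q by fact
  have "AE \<mu> in Q. \<mu> \<in> (\<Union>c\<in>C. cball c R)"
    using assms(2,3) by (intro Q.AE_prob_1) (auto simp: warm_starts_def Q.emeasure_eq_measure)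
  then show ?thesis
    by simp
qed

theorem lemma5p1:
  fixes Q0 :: "'a::euclidean_space measure"
    and \<sigma> R \<epsilon> :: real and C :: "'a set" and V :: "'a \<Rightarrow> 'a set"
    and floc :: "'a \<Rightarrow> 'a"
  assumes "prob_space Q0" and "sets Q0 = sets borel"
    and "\<exists>B. bounded B \<and> B \<in> sets borel \<and> emeasure Q0 B = 1"
    and "\<sigma> > 0" and "R > 0" and "0 < \<epsilon>" and "\<epsilon> < 1"
    and "warm_starts Q0 R C"
    and "voronoi_partition C V"
    and "R' = 3 * R + 2 * sqrt 2 * \<sigma> * sqrt (ln (real (card C) / \<epsilon>))"
    and "\<forall>c\<in>C. measure Q0 (cball c R') > 0"
    and "\<forall>c\<in>C. \<forall>y\<in>V c. floc y = post_mean (cond_measure Q0 (cball c R')) \<sigma> y"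
  shows "(\<integral>\<^sup>+ y. ennreal ((norm (post_mean Q0 \<sigma> y - floc y))\<^sup>2) \<partial>(gauss_conv Q0 \<sigma>))
           \<le> ennreal ((32 * \<sigma>\<^sup>2 + 6 * R'\<^sup>2) * \<epsilon>)"
proof -
  interpret Q0: bounded_support_prob Q0
    using assms(1-3) by (simp add: bounded_support_prob_def bounded_support_prob_axioms_def)
  define L where "L = ln (real (card C) / \<epsilon>)"
  have "finite C" and "card C \<ge> 1"
    using assms(8) warm_starts_card_ge_1 by (auto simp: warm_starts_def)
  then have "L > 0" and exp_L: "exp (- L) = \<epsilon> / card C"
    using assms(6,7) by (auto simp: L_def exp_minus less_divide_eq_1)
  have "0 \<le> 2 * sqrt 2 * \<sigma> * sqrt L"
    using assms(4) \<open>L > 0\<close> by simp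
  then have margin: "2 * sqrt 2 * \<sigma> * sqrt L \<le> R' - R" and "R < R'"
    using assms(5,10) unfolding L_def by linarith+
  have "(\<integral>\<^sup>+ y. ennreal ((norm (post_mean Q0 \<sigma> y - floc y))\<^sup>2) \<partial>(gauss_conv Q0 \<sigma>))
      \<le> (\<Sum>c\<in>C. \<integral>\<^sup>+y. indicator (V c) y
          * (\<integral>\<^sup>+\<mu>. ennreal (gauss_pdf \<sigma> (y - \<mu>) * tail_weight c R' \<mu>) \<partial>Q0) \<partial>lborel)"
    using assms(4,5,9,11,12) \<open>R < R'\<close> \<open>finite C\<close>
    by (intro Q0.nn_integral_gauss_conv_local_error_le) (auto simp: voronoi_partition_def)
  also have "\<dots> \<le> (\<Sum>c\<in>C. ennreal ((32 * \<sigma>\<^sup>2 + 6 * R'\<^sup>2) * exp (- L)))"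
    using assms(1,2,4,5,9) warm_starts_AE_near[OF assms(1,2,8)] \<open>R < R'\<close> margin \<open>L > 0\<close>
    by (intro sum_mono nn_integral_voronoi_cell_le tail_weight_exp_bound) (auto simp: voronoi_partition_def)
  also have "\<dots> = ennreal ((32 * \<sigma>\<^sup>2 + 6 * R'\<^sup>2) * \<epsilon>)"
    using \<open>card C \<ge> 1\<close> assms(6) by (subst sum_ennreal) (simp_all add: exp_L)
  finally show ?thesis .
qed

end
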